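(* Let $A$ and $B$ be positive definite $d\times d$ matrices, $\lambda\in(0,1)$, and denote $(A,B)_\lambda=\lambda A+(1-\lambda)B$ and $(A^2,B^2)_\lambda=\lambda A^2+(1-\lambda)B^2$. Then $$\mathrm{Tr}\left(\sqrt{(A^2,B^2)_\lambda}-(A,B)_\lambda\right)=\lambda(1-\lambda)\,\mathrm{Tr}\left((A-B)^2\left(\sqrt{(A^2,B^2)_\lambda}+(A,B)_\lambda\right)^{-1}\right).$$
   Context: $\sqrt{\cdot}$ denotes the positive semidefinite square root of a positive definite matrix. *)

theory Defs
  imports "HOL-Analysis.Analysis"
begin

definition cadjoint :: "complex^'n^'n \<Rightarrow> complex^'n^'n" where
  "cadjoint A = (\<chi> i j. cnj (A $ j $ i))"

definition qform :: "complex^'n^'n \<Rightarrow> complex^'n \<Rightarrow> complex" where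
  "qform A x = (\<Sum>i\<in>UNIV. cnj (x $ i) * (A *v x) $ i)"

definition pos_def_mat :: "complex^'n^'n \<Rightarrow> bool" where
  "pos_def_mat A \<longleftrightarrow> cadjoint A = A \<and> (\<forall>x. x \<noteq> 0 \<longrightarrow> 0 < Re (qform A x))"

definition pos_semidef_mat :: "complex^'n^'n \<Rightarrow> bool" where
  "pos_semidef_mat A \<longleftrightarrow> cadjoint A = A \<and> (\<forall>x. 0 \<le> Re (qform A x))"

definition msqrt :: "complex^'n^'n \<Rightarrow> complex^'n^'n" where
  "msqrt A = (THE S. pos_semidef_mat S \<and> S ** S = A)"

end

theory Submission
  imports Defs "HOL-Computational_Algebra.Fundamental_Theorem_Algebra"
begin

text \<open>Write \<open>S\<close> for the square root and \<open>C = (A,B)\<^sub>\<lambda>\<close>. Then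
  \<open>S\<^sup>2 - C\<^sup>2 = \<lambda>(1-\<lambda>)(A-B)\<^sup>2\<close>, and \<open>S\<^sup>2 - C\<^sup>2 = (S - C)(S + C) + C(S + C) - (S + C)C\<close>;
  multiplying on the right by \<open>(S + C)\<^sup>-\<^sup>1\<close> and taking traces, the commutator term
  vanishes and leaves \<open>Tr (S - C)\<close>. \<open>S + C\<close> is positive definite, hence invertible.

  That \<open>msqrt\<close> is a positive definite square root at all needs a functional calculus:
  a positive definite \<open>M\<close> is annihilated by \<open>\<Prod>(X - \<mu>)\<close> over finitely many distinct
  \<open>\<mu> > 0\<close>, so for a real polynomial \<open>q\<close> interpolating \<open>\<mu>\<^sup>1\<^sup>/\<^sup>4\<close> at these points,
  \<open>S = q(M)\<^sup>2\<close> is a positive definite root of \<open>M\<close>.\<close>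

section \<open>Matrix identities\<close>

lemma matrix_add_rdistrib: "((A::'a::semiring_1^'n^'m) + B) ** C = A ** C + B ** C"
  by (simp add: matrix_matrix_mult_def vec_eq_iff sum.distrib distrib_right)

lemma matrix_diff_rdistrib: "((A::'a::ring_1^'n^'m) - B) ** C = A ** C - B ** C"
  by (simp add: matrix_matrix_mult_def vec_eq_iff sum_subtractf left_diff_distrib)

lemma matrix_diff_ldistrib: "(A::'a::ring_1^'n^'m) ** (B - C) = A ** B - A ** C"
  by (simp add: matrix_matrix_mult_def vec_eq_iff sum_subtractf right_diff_distrib)

lemma mat_matrix_mult_nth: "(mat c ** (X::'a::semiring_1^'n^'m)) $ i $ j = c * X $ i $ j"
  by (simp add: matrix_matrix_mult_def mat_def if_distrib if_distribR sum.delta cong: if_cong)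

lemma matrix_mat_mult_nth: "((X::'a::semiring_1^'n^'m) ** mat c) $ i $ j = X $ i $ j * c"
  by (simp add: matrix_matrix_mult_def mat_def if_distrib if_distribR sum.delta' cong: if_cong)

lemma mat_matrix_mult_commute: "mat c ** (X::'a::comm_semiring_1^'n^'n) = X ** mat c"
  by (simp add: vec_eq_iff mat_matrix_mult_nth matrix_mat_mult_nth mult.commute)

lemma mat_mult_mat: "mat a ** (mat b :: 'a::semiring_1^'n^'n) = mat (a * b)"
  by (simp add: vec_eq_iff mat_matrix_mult_nth) (simp add: mat_def)

lemma mat_add: "mat a + (mat b :: 'a::semiring_1^'n^'n) = mat (a + b)"
  by (simp add: vec_eq_iff mat_def)

lemma mat_vector_mult: "mat c *v x = c *s x"
  by (simp add: vec_eq_iff matrix_vector_mult_def mat_def if_distrib if_distribR sum.delta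
      cong: if_cong)

lemma mat_of_real_mult: "mat (of_real r) ** (X::'a::real_algebra_1^'n^'m) = r *\<^sub>R X"
  by (simp add: vec_eq_iff mat_matrix_mult_nth) (simp add: scaleR_conv_of_real)

lemma mat_mult_cancel:
  assumes "c \<noteq> 0" and "mat c ** X = (0::'a::field^'n^'m)"
  shows "X = 0"
proof -
  have "X = mat (inverse c * c) ** X"
    using assms(1) by simp
  also have "\<dots> = 0"
    by (simp flip: mat_mult_mat add: matrix_mul_assoc[symmetric] assms(2))
  finally show ?thesis .
qed

lemma trace_scaleR: "trace (r *\<^sub>R (A::'a::real_algebra_1^'n^'n)) = r *\<^sub>R trace A"
  by (simp add: trace_def scaleR_sum_right)

lemma invertible_matrix_inv:
  assumes "invertible A"
  shows "A ** matrix_inv A = mat 1" and "matrix_inv A ** A = mat 1"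
proof -
  have "A ** matrix_inv A = mat 1 \<and> matrix_inv A ** A = mat 1"
    unfolding matrix_inv_def by (rule someI_ex) (use assms in \<open>simp add: invertible_def\<close>)
  then show "A ** matrix_inv A = mat 1" and "matrix_inv A ** A = mat 1"
    by simp_all
qed

lemma trace_diff_squares_mult_matrix_inv:
  fixes S C :: "'a::comm_ring_1^'n^'n"
  assumes "invertible (S + C)"
  shows "trace ((S ** S - C ** C) ** matrix_inv (S + C)) = trace (S - C)"
proof -
  define P where "P = S + C"
  have PP': "P ** matrix_inv P = mat 1" and P'P: "matrix_inv P ** P = mat 1"
    using invertible_matrix_inv assms by (simp_all add: P_def)
  have "S ** S - C ** C = (S - C) ** P + C ** P - P ** C"
    by (simp add: P_def matrix_add_ldistrib matrix_add_rdistrib matrix_diff_rdistrib algebra_simps)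
  then have "(S ** S - C ** C) ** matrix_inv P
      = (S - C) ** (P ** matrix_inv P) + C ** (P ** matrix_inv P) - P ** (C ** matrix_inv P)"
    by (simp add: matrix_add_rdistrib matrix_diff_rdistrib matrix_mul_assoc)
  moreover have "trace (P ** (C ** matrix_inv P)) = trace C"
    by (simp add: trace_mul_sym[of P] P'P flip: matrix_mul_assoc)
  ultimately have "trace ((S ** S - C ** C) ** matrix_inv P) = trace (S - C)"
    by (simp add: PP' trace_add trace_sub)
  then show ?thesis
    by (simp add: P_def)
qed

lemma convex_combination_square_gap:
  fixes A B :: "'a::{real_algebra_1,comm_ring_1}^'n^'n"
  shows "l *\<^sub>R (A ** A) + (1 - l) *\<^sub>R (B ** B) - (l *\<^sub>R A + (1 - l) *\<^sub>R B) ** (l *\<^sub>R A + (1 - l) *\<^sub>R B)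
       = (l * (1 - l)) *\<^sub>R ((A - B) ** (A - B))"
proof -
  have entry: "L * (a * a') + (1 - L) * (b * b') - (L * a + (1 - L) * b) * (L * a' + (1 - L) * b')
      = L * (1 - L) * ((a - b) * (a' - b'))" for L a a' b b' :: 'a
    by (simp add: algebra_simps)
  show ?thesis
    by (simp add: vec_eq_iff matrix_matrix_mult_def scaleR_sum_right)
      (simp add: scaleR_conv_of_real sum_distrib_left sum_subtractf
        flip: sum.distrib entry[of "of_real l"])
qed

section \<open>Hermitian and positive definite matrices\<close>

lemma cadjoint_nth [simp]: "cadjoint A $ i $ j = cnj (A $ j $ i)"
  by (simp add: cadjoint_def)

lemma cadjoint_zero [simp]: "cadjoint 0 = 0"
  by (simp add: vec_eq_iff)

lemma cadjoint_add: "cadjoint (A + B) = cadjoint A + cadjoint B"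
  by (simp add: vec_eq_iff)

lemma cadjoint_scaleR: "cadjoint (r *\<^sub>R A) = r *\<^sub>R cadjoint A"
  by (simp add: vec_eq_iff)

lemma cadjoint_mult: "cadjoint (A ** B) = cadjoint B ** cadjoint A"
  by (simp add: vec_eq_iff matrix_matrix_mult_def mult.commute)

lemma cadjoint_mat: "cadjoint (mat a) = mat (cnj a)"
  by (simp add: vec_eq_iff mat_def)

definition cinner :: "complex^'n \<Rightarrow> complex^'n \<Rightarrow> complex" where
  "cinner x y = (\<Sum>i\<in>UNIV. cnj (x $ i) * y $ i)"

lemma qform_eq_cinner: "qform A x = cinner x (A *v x)"
  by (simp add: qform_def cinner_def)

lemma cinner_zero_right [simp]: "cinner x 0 = 0"
  by (simp add: cinner_def)

lemma cinner_matrix_mult: "cinner x (A *v y) = cinner (cadjoint A *v x) y"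
  unfolding cinner_def matrix_vector_mult_def
  by (simp add: sum_distrib_left sum_distrib_right) (subst sum.swap, simp add: mult_ac)

lemma cinner_commute: "cnj (cinner x y) = cinner y x"
  by (simp add: cinner_def mult.commute)

lemma cinner_scale_right: "cinner x (z *s y) = z * cinner x y"
  by (simp add: cinner_def sum_distrib_left mult_ac)

lemma cinner_self: "cinner x x = complex_of_real (\<Sum>i\<in>UNIV. (cmod (x $ i))\<^sup>2)"
proof -
  have "cnj z * z = complex_of_real ((cmod z)\<^sup>2)" for z
    by (metis complex_norm_square mult.commute)
  then show ?thesis
    unfolding cinner_def of_real_sum by simp
qed

lemma Re_cinner_self_pos:
  assumes "x \<noteq> 0"
  shows "0 < Re (cinner x x)"
proof -
  obtain i where "x $ i \<noteq> 0"
    using assms by (auto simp: vec_eq_iff)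
  then have "0 < (cmod (x $ i))\<^sup>2"
    by simp
  also have "\<dots> \<le> (\<Sum>i\<in>UNIV. (cmod (x $ i))\<^sup>2)"
    by (rule member_le_sum) auto
  finally show ?thesis
    by (simp add: cinner_self)
qed

lemma qform_add: "qform (A + B) x = qform A x + qform B x"
  by (simp add: qform_def matrix_vector_mult_add_rdistrib distrib_left sum.distrib)

lemma qform_scaleR: "qform (r *\<^sub>R A) x = complex_of_real r * qform A x"
  by (simp add: qform_def matrix_vector_mult_def sum_distrib_left sum_distrib_right)
    (simp add: scaleR_conv_of_real mult_ac)

lemma qform_hermitian_square:
  assumes "cadjoint A = A"
  shows "qform (A ** A) x = cinner (A *v x) (A *v x)"
  using cinner_matrix_mult[of x A "A *v x"] assms
  by (simp add: qform_eq_cinner matrix_vector_mul_assoc)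

lemma Im_qform_hermitian:
  assumes "cadjoint A = A"
  shows "Im (qform A x) = 0"
proof -
  have "cnj (qform A x) = qform A x"
    by (metis assms cinner_commute cinner_matrix_mult qform_eq_cinner)
  then show ?thesis
    by (metis Reals_cnj_iff complex_is_Real_iff)
qed

lemma hermitian_square_eq_0:
  assumes "cadjoint H = H" and "H ** H = 0"
  shows "H = 0"
proof (rule matrix_eq[THEN iffD2, rule_format])
  fix v
  have "cinner (H *v v) (H *v v) = qform (H ** H) v"
    by (simp add: qform_hermitian_square assms(1))
  also have "\<dots> = 0"
    by (simp add: assms(2) qform_eq_cinner)
  finally show "H *v v = 0 *v v"
    using Re_cinner_self_pos by fastforce
qed

lemma pos_def_mat_imp_pos_semidef_mat: "pos_def_mat A \<Longrightarrow> pos_semidef_mat A"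
  unfolding pos_def_mat_def pos_semidef_mat_def
  by (metis cinner_zero_right less_eq_real_def matrix_vector_mult_0_right order_refl
      qform_eq_cinner zero_complex.sel(1))

lemma pos_def_mat_mult_vec_eq_0:
  assumes "pos_def_mat A" and "A *v x = 0"
  shows "x = 0"
  using assms by (auto simp: pos_def_mat_def qform_eq_cinner)

lemma pos_def_mat_invertible: "pos_def_mat A \<Longrightarrow> invertible A"
  by (metis invertible_left_inverse matrix_left_invertible_ker pos_def_mat_mult_vec_eq_0)

lemma pos_def_mat_add: "pos_def_mat A \<Longrightarrow> pos_def_mat B \<Longrightarrow> pos_def_mat (A + B)"
  by (simp add: pos_def_mat_def cadjoint_add qform_add add_pos_pos)

lemma pos_def_mat_scaleR: "pos_def_mat A \<Longrightarrow> 0 < r \<Longrightarrow> pos_def_mat (r *\<^sub>R A)"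
  by (simp add: pos_def_mat_def cadjoint_scaleR qform_scaleR)

lemma pos_def_mat_hermitian_square:
  assumes "cadjoint A = A" and "\<And>x. A *v x = 0 \<Longrightarrow> x = 0"
  shows "pos_def_mat (A ** A)"
  using assms Re_cinner_self_pos
  by (auto simp: pos_def_mat_def cadjoint_mult qform_hermitian_square)

lemma pos_def_mat_square: "pos_def_mat A \<Longrightarrow> pos_def_mat (A ** A)"
  by (metis pos_def_mat_def pos_def_mat_hermitian_square pos_def_mat_mult_vec_eq_0)

lemma pos_def_mat_eigenvalue:
  assumes "pos_def_mat M" and "(M - mat z) *v x = 0" and "x \<noteq> 0"
  shows "\<exists>r>0. z = complex_of_real r"
proof -
  have Mx: "M *v x = z *s x"
    using assms(2) by (simp add: matrix_vector_mult_diff_rdistrib mat_vector_mult)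
  define c where "c = Re (cinner x x)"
  have c: "cinner x x = complex_of_real c" "0 < c"
    using Re_cinner_self_pos[OF assms(3)] by (simp_all add: c_def cinner_self)
  have "qform M x = z * complex_of_real c"
    by (simp add: qform_eq_cinner Mx cinner_scale_right c(1))
  moreover have "Im (qform M x) = 0" and "0 < Re (qform M x)"
    using assms(1,3) Im_qform_hermitian by (auto simp: pos_def_mat_def)
  ultimately have "Im z = 0" and "0 < Re z"
    using c(2) by (auto simp: zero_less_mult_iff)
  then show ?thesis
    by (metis complex_is_Real_iff of_real_Re)
qed

lemma pos_def_mat_shift_mult_eq_0:
  assumes "pos_def_mat M" and "\<nexists>r. 0 < r \<and> z = complex_of_real r" and "(M - mat z) ** W = 0"
  shows "W = 0"
proof (rule matrix_eq[THEN iffD2, rule_format])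
  fix v
  have "(M - mat z) *v (W *v v) = 0"
    using assms(3) by (metis matrix_vector_mul_assoc matrix_vector_mult_0)
  then show "W *v v = 0 *v v"
    using pos_def_mat_eigenvalue[OF assms(1)] assms(2) by auto
qed

section \<open>Polynomials in a matrix\<close>

definition poly_mat :: "'a::comm_ring_1 poly \<Rightarrow> 'a^'n^'n \<Rightarrow> 'a^'n^'n" where
  "poly_mat p M = fold_coeffs (\<lambda>a Y. mat a + M ** Y) p 0"

lemma poly_mat_0 [simp]: "poly_mat 0 M = 0"
  by (simp add: poly_mat_def)

lemma poly_mat_pCons [simp]: "poly_mat (pCons a p) M = mat a + M ** poly_mat p M"
  by (cases "p = 0 \<and> a = 0") (auto simp: poly_mat_def)

lemma poly_mat_add: "poly_mat (p + q) M = poly_mat p M + poly_mat q M"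
proof (induction p arbitrary: q)
  case (pCons a p)
  then show ?case
    by (cases q) (simp add: matrix_add_ldistrib mat_add[symmetric] add_ac)
qed simp

lemma poly_mat_smult: "poly_mat (smult c p) M = mat c ** poly_mat p M"
proof (induction p)
  case (pCons a p)
  have "mat c ** (mat a + M ** poly_mat p M) = mat (c * a) + M ** (mat c ** poly_mat p M)"
    by (simp add: matrix_add_ldistrib mat_mult_mat matrix_mul_assoc mat_matrix_mult_commute[of c M])
  then show ?case
    by (simp add: pCons.IH)
qed simp

lemma poly_mat_diff: "poly_mat (p - q) M = poly_mat p M - poly_mat q M"
  by (metis add_diff_cancel diff_add_cancel poly_mat_add)

lemma poly_mat_mult: "poly_mat (p * q) M = poly_mat p M ** poly_mat q M"
  by (induction p) (simp_all add: poly_mat_add poly_mat_smult matrix_add_rdistrib matrix_mul_assoc)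

lemma poly_mat_mult_commute: "poly_mat p M ** poly_mat q M = poly_mat q M ** poly_mat p M"
  by (metis mult.commute poly_mat_mult)

lemma poly_mat_power: "poly_mat (p ^ k) M = poly_mat (monom 1 k) (poly_mat p M)"
  by (induction k) (simp_all add: one_pCons monom_Suc poly_mat_mult)

lemma poly_mat_linear: "poly_mat [:-z, 1:] M = M - mat z"
  by simp (simp add: vec_eq_iff mat_def)

lemma poly_mat_monom_of_real:
  "poly_mat (monom (of_real r) k) (M::'a::{comm_ring_1,real_algebra_1}^'n^'n)
     = r *\<^sub>R poly_mat (monom 1 k) M"
  using poly_mat_smult[of "of_real r" "monom 1 k" M] by (simp add: smult_monom mat_of_real_mult)

lemma poly_mat_sum: "poly_mat (\<Sum>i\<in>A. f i) M = (\<Sum>i\<in>A. poly_mat (f i) M)"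
  by (induction A rule: infinite_finite_induct) (simp_all add: poly_mat_add)

lemma poly_mat_commute:
  assumes "T ** M = M ** T"
  shows "T ** poly_mat p M = poly_mat p M ** T"
proof (induction p)
  case (pCons a p)
  have "T ** (mat a + M ** poly_mat p M) = mat a ** T + M ** (T ** poly_mat p M)"
    by (simp add: matrix_add_ldistrib matrix_mul_assoc assms mat_matrix_mult_commute[of a T])
  also have "\<dots> = (mat a + M ** poly_mat p M) ** T"
    by (simp add: pCons.IH matrix_add_rdistrib matrix_mul_assoc)
  finally show ?case
    by simp
qed simp

text \<open>Since the vector space of matrices has dimension \<open>D\<close>, the \<open>D + 1\<close> powers
  \<open>M\<^sup>0, \<dots>, M\<^sup>D\<close> are linearly dependent (or coincide).\<close>
lemma poly_mat_annihilator_exists: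
  fixes M :: "'a::{comm_ring_1,real_algebra_1,euclidean_space}^'n^'n"
  obtains p where "p \<noteq> 0" and "poly_mat p M = 0"
proof -
  define D where "D = DIM('a^'n^'n)"
  define f where "f k = poly_mat (monom 1 k) M" for k
  show ?thesis
  proof (cases "inj_on f {..D}")
    case False
    then obtain i j where "j \<le> D" "i \<noteq> j" "f i = f j"
      unfolding inj_on_def by auto
    then show ?thesis
      by (intro that[of "monom 1 j - monom 1 i"])
        (auto simp: poly_mat_diff f_def poly_eq_iff)
  next
    case True
    have "card (f ` {..D}) = Suc D"
      using True by (simp add: card_image)
    then have "real_vector.dependent (f ` {..D})"
      by (intro dependent_biggerset) (simp add: D_def)
    then obtain t u where tu: "finite t" "t \<subseteq> f ` {..D}" "(\<Sum>v\<in>t. u v *\<^sub>R v) = 0"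
      and "\<exists>v\<in>t. u v \<noteq> 0"
      unfolding real_vector.dependent_explicit by blast
    then obtain k where k: "k \<le> D" "f k \<in> t" "u (f k) \<noteq> 0"
      by blast
    define c where "c k = (if f k \<in> t then u (f k) else 0)" for k
    define p :: "'a poly" where "p = (\<Sum>k\<le>D. monom (of_real (c k)) k)"
    have "coeff p k = of_real (c k)"
      using k(1) by (simp add: p_def coeff_sum)
    then have "p \<noteq> 0"
      using k by (auto simp: c_def)
    have "poly_mat p M = (\<Sum>k\<le>D. c k *\<^sub>R f k)"
      unfolding p_def poly_mat_sum poly_mat_monom_of_real f_def ..
    also have "\<dots> = (\<Sum>v\<in>f ` {..D}. (if v \<in> t then u v else 0) *\<^sub>R v)"
      using True by (simp add: sum.reindex c_def)
    also have "\<dots> = 0"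
      using tu by (simp add: if_distrib[of "\<lambda>x. x *\<^sub>R _"] sum.If_cases Int_absorb1)
    finally show ?thesis
      using \<open>p \<noteq> 0\<close> that by blast
  qed
qed

lemma map_poly_of_real_diff: "map_poly of_real (p - q) = map_poly of_real p - map_poly of_real q"
  by (simp add: poly_eq_iff coeff_map_poly)

lemma map_poly_of_real_mult:
  "map_poly (of_real :: real \<Rightarrow> 'a::{real_algebra_1,comm_ring_1}) (p * q)
     = map_poly of_real p * map_poly of_real q"
  by (simp add: poly_eq_iff coeff_map_poly coeff_mult of_real_sum)

lemma map_poly_of_real_power:
  "map_poly (of_real :: real \<Rightarrow> 'a::{real_algebra_1,comm_ring_1}) (p ^ k) = map_poly of_real p ^ k"
  by (induction k) (simp_all add: map_poly_of_real_mult)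

lemma map_poly_of_real_linear: "map_poly of_real [:-x, 1:] = [:-of_real x, 1:]"
  by (simp add: map_poly_pCons)

lemma poly_mat_map_poly_of_real_hermitian:
  assumes "cadjoint M = M"
  shows "cadjoint (poly_mat (map_poly complex_of_real p) M) = poly_mat (map_poly complex_of_real p) M"
proof (induction p)
  case (pCons a p)
  then show ?case
    by (simp add: map_poly_pCons cadjoint_add cadjoint_mult cadjoint_mat assms
        poly_mat_commute[of M M])
qed simp

section \<open>The positive definite square root\<close>

text \<open>Factors \<open>X - z\<close> with \<open>z\<close> not a positive real can be dropped, because
  \<open>M - z\<close> is then injective.\<close>
lemma pos_def_mat_positive_root_factors:
  fixes M Y :: "complex^'n^'n"
  assumes "pos_def_mat M" and "poly_mat (\<Prod>z\<in>#Z. [:-z, 1:]) M ** Y = 0"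
  shows "\<exists>X. (\<forall>x\<in>#X. 0 < x) \<and> poly_mat (map_poly of_real (\<Prod>x\<in>#X. [:-x, 1:])) M ** Y = 0"
  using assms(2)
proof (induction Z arbitrary: Y)
  case empty
  then show ?case
    by (intro exI[of _ "{#}"]) (simp add: one_pCons)
next
  case (add z Z)
  let ?L = "poly_mat [:-z, 1:] M" and ?P = "poly_mat (\<Prod>w\<in>#Z. [:-w, 1:]) M"
  have LP: "(?L ** ?P) ** Y = 0"
    using add.prems by (simp only: image_mset_add_mset prod_mset.add_mset poly_mat_mult)
  then have "?L ** (?P ** Y) = 0"
    by (simp only: matrix_mul_assoc)
  have "?P ** (?L ** Y) = 0"
    using LP by (simp only: matrix_mul_assoc poly_mat_mult_commute[of "[:-z, 1:]"])
  show ?case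
  proof (cases "\<exists>r. 0 < r \<and> z = complex_of_real r")
    case True
    then obtain r where r: "0 < r" "z = complex_of_real r"
      by blast
    obtain X where X: "\<forall>x\<in>#X. 0 < x"
      and X0: "poly_mat (map_poly of_real (\<Prod>x\<in>#X. [:-x, 1:])) M ** (?L ** Y) = 0"
      using add.IH[OF \<open>?P ** (?L ** Y) = 0\<close>] by blast
    have "poly_mat (map_poly of_real (\<Prod>x\<in>#add_mset r X. [:-x, 1:])) M
        = ?L ** poly_mat (map_poly of_real (\<Prod>x\<in>#X. [:-x, 1:])) M"
      by (simp only: image_mset_add_mset prod_mset.add_mset map_poly_of_real_mult
          map_poly_of_real_linear r(2) poly_mat_mult)
    also have "\<dots> = poly_mat (map_poly of_real (\<Prod>x\<in>#X. [:-x, 1:])) M ** ?L"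
      by (rule poly_mat_mult_commute)
    finally have "poly_mat (map_poly of_real (\<Prod>x\<in>#add_mset r X. [:-x, 1:])) M ** Y = 0"
      using X0 by (simp only: matrix_mul_assoc)
    moreover have "\<forall>x\<in>#add_mset r X. 0 < x"
      using X r(1) by simp
    ultimately show ?thesis
      by blast
  next
    case False
    have "(M - mat z) ** (?P ** Y) = 0"
      using \<open>?L ** (?P ** Y) = 0\<close> by (simp only: poly_mat_linear)
    then have "?P ** Y = 0"
      using pos_def_mat_shift_mult_eq_0[OF assms(1) False] by blast
    then show ?thesis
      using add.IH by blast
  qed
qed

lemma prod_mset_dvd_prod_set_power:
  "(\<Prod>x\<in>#X. f x) dvd (\<Prod>x\<in>set_mset X. f x :: 'a::comm_semiring_1) ^ size X"
proof (induction X)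
  case (add x X)
  define P where "P = (\<Prod>x\<in>set_mset (add_mset x X). f x)"
  have "(\<Prod>x\<in>set_mset X. f x) dvd P"
    unfolding P_def by (rule prod_dvd_prod_subset) auto
  then have "(\<Prod>x\<in>#X. f x) dvd P ^ size X"
    using add.IH dvd_power_same dvd_trans by blast
  moreover have "f x dvd P"
    unfolding P_def by (rule dvd_prodI) auto
  ultimately have "f x * (\<Prod>x\<in>#X. f x) dvd P * P ^ size X"
    by (rule mult_dvd_mono[rotated])
  then show ?case
    by (simp add: P_def)
qed simp

lemma hermitian_nilpotent_eq_0:
  fixes H :: "complex^'n^'n"
  assumes "cadjoint H = H" and "poly_mat (monom 1 K) H = 0"
  shows "H = 0"
  using assms(2)
proof (induction K rule: less_induct)
  case (less K)
  consider "K = 0" | "K = 1" | k where "K = Suc (Suc k)"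
    by (metis One_nat_def not0_implies_Suc)
  then show ?case
  proof cases
    case 1
    then have "mat 1 = (0::complex^'n^'n)"
      using less.prems by (simp add: one_pCons)
    then show ?thesis
      by (metis matrix_mul_lid times0_left)
  next
    case 2
    then show ?thesis
      using less.prems by (simp add: monom_Suc one_pCons)
  next
    case 3
    define G where "G = poly_mat (monom 1 (Suc k)) H"
    have "cadjoint G = G"
      using poly_mat_map_poly_of_real_hermitian[OF assms(1), of "monom 1 (Suc k)"]
      by (simp add: G_def map_poly_monom)
    moreover have "G ** G = poly_mat (monom 1 K) H ** poly_mat (monom 1 k) H"
      by (simp add: G_def 3 mult_monom flip: poly_mat_mult)
    ultimately have "G = 0"
      using hermitian_square_eq_0 less.prems by simp
    then show ?thesis
      using less.IH[of "Suc k"] 3 by (simp add: G_def)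
  qed
qed

lemma poly_interpolation_exists:
  fixes f :: "'a::field \<Rightarrow> 'a"
  assumes "finite L"
  shows "\<exists>q. \<forall>x\<in>L. poly q x = f x"
  using assms
proof (induction L rule: finite_induct)
  case (insert a L)
  then obtain q where q: "\<forall>x\<in>L. poly q x = f x"
    by blast
  define R where "R = (\<Prod>x\<in>L. [:-x, 1:])"
  have "poly R x = 0" if "x \<in> L" for x
    using that insert(1) unfolding R_def poly_prod by (intro prod_zero) auto
  moreover have "poly R a \<noteq> 0"
    using insert(1,2) unfolding R_def poly_prod by (subst prod_zero_iff) auto
  ultimately have "\<forall>x\<in>insert a L. poly (q + smult ((f a - poly q a) / poly R a) R) x = f x"
    using q by auto
  then show ?case
    by blast
qed simp

lemma prod_linear_dvd_if_roots:
  fixes p :: "'a::idom poly"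
  assumes "finite L" and "\<forall>x\<in>L. poly p x = 0"
  shows "(\<Prod>x\<in>L. [:-x, 1:]) dvd p"
  using assms
proof (induction L arbitrary: p rule: finite_induct)
  case (insert a L)
  then obtain w where w: "p = (\<Prod>x\<in>L. [:-x, 1:]) * w"
    by (meson dvdE insert_iff)
  have "poly (\<Prod>x\<in>L. [:-x, 1:]) a \<noteq> 0"
    using insert(1,2) unfolding poly_prod by (subst prod_zero_iff) auto
  then have "poly w a = 0"
    using insert.prems w by simp
  then obtain w' where "w = [:-a, 1:] * w'"
    by (metis dvdE poly_eq_0_iff_dvd)
  then have "p = ([:-a, 1:] * (\<Prod>x\<in>L. [:-x, 1:])) * w'"
    using w by (simp only: mult_ac)
  then show ?case
    unfolding prod.insert[OF insert(1,2)] by (rule dvdI)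
qed simp

lemma pos_def_mat_annihilated_by_positive_roots:
  fixes M :: "complex^'n^'n"
  assumes "pos_def_mat M"
  obtains L where "finite L" and "\<forall>x\<in>L. 0 < x"
    and "poly_mat (map_poly of_real (\<Prod>x\<in>L. [:-x, 1:])) M = 0"
proof -
  obtain p :: "complex poly" where "p \<noteq> 0" and "poly_mat p M = 0"
    using poly_mat_annihilator_exists by blast
  moreover have "p = smult (lead_coeff p) (\<Prod>z\<in>#proots p. [:-z, 1:])"
    by (simp add: complex_poly_decompose_multiset)
  ultimately have "mat (lead_coeff p) ** poly_mat (\<Prod>z\<in>#proots p. [:-z, 1:]) M = 0"
    by (metis poly_mat_smult)
  then have "poly_mat (\<Prod>z\<in>#proots p. [:-z, 1:]) M ** mat 1 = 0"
    by (subst matrix_mul_rid, rule mat_mult_cancel[rotated]) (simp add: \<open>p \<noteq> 0\<close>)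
  then obtain X where X: "\<forall>x\<in>#X. 0 < x"
    and X0: "poly_mat (map_poly of_real (\<Prod>x\<in>#X. [:-x, 1:])) M = 0"
    using pos_def_mat_positive_root_factors[OF assms] by (metis matrix_mul_rid)
  define R where "R = (\<Prod>x\<in>set_mset X. [:-x, 1:])"
  obtain w where w: "R ^ size X = (\<Prod>x\<in>#X. [:-x, 1:]) * w"
    using prod_mset_dvd_prod_set_power unfolding R_def by (rule dvdE)
  have "poly_mat (map_poly of_real (R ^ size X)) M = 0"
    unfolding w map_poly_of_real_mult poly_mat_mult X0 by simp
  then have "poly_mat (monom 1 (size X)) (poly_mat (map_poly of_real R) M) = 0"
    by (simp only: map_poly_of_real_power poly_mat_power)
  moreover have "cadjoint (poly_mat (map_poly of_real R) M) = poly_mat (map_poly of_real R) M"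
    using assms by (simp add: pos_def_mat_def poly_mat_map_poly_of_real_hermitian)
  ultimately have "poly_mat (map_poly of_real R) M = 0"
    by (rule hermitian_nilpotent_eq_0[rotated])
  then show ?thesis
    using X that[of "set_mset X"] by (simp add: R_def)
qed

text \<open>Taking a fourth root makes \<open>S = Q\<^sup>2\<close> the square of a Hermitian matrix, hence
  positive definite without any further spectral theory.\<close>
lemma pos_def_mat_sqrt_exists:
  fixes M :: "complex^'n^'n"
  assumes "pos_def_mat M"
  obtains S where "pos_def_mat S" and "S ** S = M"
    and "\<And>T. T ** M = M ** T \<Longrightarrow> T ** S = S ** T"
proof -
  obtain L where L: "finite L" "\<forall>x\<in>L. 0 < x"
    and L0: "poly_mat (map_poly of_real (\<Prod>x\<in>L. [:-x, 1:])) M = 0"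
    using pos_def_mat_annihilated_by_positive_roots[OF assms] by blast
  obtain q where q: "\<forall>x\<in>L. poly q x = sqrt (sqrt x)"
    using poly_interpolation_exists[OF L(1), of "\<lambda>x. sqrt (sqrt x)"] by blast
  have "(\<Prod>x\<in>L. [:-x, 1:]) dvd q * q * (q * q) - [:0, 1:]"
    using L q by (intro prod_linear_dvd_if_roots) (auto simp: real_sqrt_mult[symmetric])
  then obtain w where w: "q * q * (q * q) - [:0, 1:] = (\<Prod>x\<in>L. [:-x, 1:]) * w"
    by (rule dvdE)
  define Q where "Q = poly_mat (map_poly of_real q) M"
  have "poly_mat (map_poly of_real (q * q * (q * q) - [:0, 1:])) M = 0"
    unfolding w map_poly_of_real_mult poly_mat_mult L0 by simp
  then have QQQQ: "(Q ** Q) ** (Q ** Q) = M"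
    by (simp add: Q_def map_poly_of_real_diff map_poly_of_real_mult poly_mat_diff poly_mat_mult
        map_poly_pCons)
  have "cadjoint Q = Q"
    using assms by (simp add: Q_def pos_def_mat_def poly_mat_map_poly_of_real_hermitian)
  moreover have "x = 0" if "Q *v x = 0" for x
  proof -
    have "M *v x = (Q ** Q ** Q) *v (Q *v x)"
      by (simp flip: QQQQ add: matrix_vector_mul_assoc matrix_mul_assoc)
    then show "x = 0"
      using that assms pos_def_mat_mult_vec_eq_0 by simp
  qed
  ultimately have "pos_def_mat (Q ** Q)"
    by (rule pos_def_mat_hermitian_square)
  moreover have "T ** (Q ** Q) = (Q ** Q) ** T" if "T ** M = M ** T" for T
    using poly_mat_commute[OF that, of "map_poly of_real q"]
    by (simp add: Q_def matrix_mul_assoc) (metis matrix_mul_assoc)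
  ultimately show ?thesis
    using QQQQ that by blast
qed

text \<open>\<open>T\<close> commutes with \<open>M = T\<^sup>2\<close>, hence with \<open>S\<close>, so \<open>(S + T)(S - T) = S\<^sup>2 - T\<^sup>2 = 0\<close>;
  and \<open>S + T\<close> is injective.\<close>
lemma pos_def_mat_sqrt_unique:
  fixes S T :: "complex^'n^'n"
  assumes "pos_def_mat S" and "S ** S = M" and "\<And>T. T ** M = M ** T \<Longrightarrow> T ** S = S ** T"
    and "pos_semidef_mat T" and "T ** T = M"
  shows "T = S"
proof -
  have "T ** M = M ** T"
    unfolding assms(5)[symmetric] by (simp only: matrix_mul_assoc)
  then have "T ** S = S ** T"
    by (rule assms(3))
  then have ST0: "(S + T) ** (S - T) = 0"
    by (simp add: matrix_add_rdistrib matrix_diff_ldistrib assms(2,5))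
  have "(S - T) *v v = 0 *v v" for v
  proof -
    define w where "w = (S - T) *v v"
    have "qform (S + T) w = 0"
      using ST0 by (simp add: w_def qform_eq_cinner matrix_vector_mul_assoc)
    then have "Re (qform S w) + Re (qform T w) = 0"
      by (metis qform_add plus_complex.sel(1) zero_complex.sel(1))
    moreover have "0 \<le> Re (qform T w)"
      using assms(4) by (simp add: pos_semidef_mat_def)
    ultimately have "\<not> 0 < Re (qform S w)"
      by linarith
    then have "w = 0"
      using assms(1) unfolding pos_def_mat_def by blast
    then show ?thesis
      by (simp add: w_def)
  qed
  then have "S - T = 0"
    using matrix_eq by blast
  then show ?thesis
    by simp
qed

lemma msqrt_pos_def_mat:
  fixes M :: "complex^'n^'n"
  assumes "pos_def_mat M"
  shows "pos_def_mat (msqrt M)" and "msqrt M ** msqrt M = M"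
proof -
  obtain S where S: "pos_def_mat S" "S ** S = M" "\<And>T. T ** M = M ** T \<Longrightarrow> T ** S = S ** T"
    using pos_def_mat_sqrt_exists[OF assms] by blast
  have "msqrt M = S"
    unfolding msqrt_def
  proof (rule the_equality)
    show "pos_semidef_mat S \<and> S ** S = M"
      using S(1,2) pos_def_mat_imp_pos_semidef_mat by blast
  qed (use pos_def_mat_sqrt_unique[OF S] in blast)
  then show "pos_def_mat (msqrt M)" and "msqrt M ** msqrt M = M"
    using S(1,2) by simp_all
qed

theorem lemma2p1:
  fixes A B :: "complex^'n^'n" and l :: real
  assumes "pos_def_mat A" and "pos_def_mat B" and "0 < l" and "l < 1"
  shows "trace (msqrt (l *\<^sub>R (A ** A) + (1 - l) *\<^sub>R (B ** B)) - (l *\<^sub>R A + (1 - l) *\<^sub>R B))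
       = complex_of_real (l * (1 - l)) *
         trace (((A - B) ** (A - B)) **
                matrix_inv (msqrt (l *\<^sub>R (A ** A) + (1 - l) *\<^sub>R (B ** B)) + (l *\<^sub>R A + (1 - l) *\<^sub>R B)))"
proof -
  define M where "M = l *\<^sub>R (A ** A) + (1 - l) *\<^sub>R (B ** B)"
  define C where "C = l *\<^sub>R A + (1 - l) *\<^sub>R B"
  have "pos_def_mat M"
    unfolding M_def using assms by (intro pos_def_mat_add pos_def_mat_scaleR pos_def_mat_square) auto
  then have S: "pos_def_mat (msqrt M)" "msqrt M ** msqrt M = M"
    by (rule msqrt_pos_def_mat)+
  have "pos_def_mat C"
    unfolding C_def using assms by (intro pos_def_mat_add pos_def_mat_scaleR) auto
  then have "invertible (msqrt M + C)"
    using S(1) by (intro pos_def_mat_invertible pos_def_mat_add)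
  from trace_diff_squares_mult_matrix_inv[OF this]
  have "trace (msqrt M - C) = trace ((M - C ** C) ** matrix_inv (msqrt M + C))"
    unfolding S(2) by (rule sym)
  also have "M - C ** C = (l * (1 - l)) *\<^sub>R ((A - B) ** (A - B))"
    unfolding M_def C_def by (rule convex_combination_square_gap)
  finally have "trace (msqrt M - C)
      = (l * (1 - l)) *\<^sub>R trace ((A - B) ** (A - B) ** matrix_inv (msqrt M + C))"
    by (simp only: trace_scaleR flip: scalar_matrix_assoc)
  then show ?thesis
    by (simp only: M_def C_def scaleR_conv_of_real)
qed

end
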